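(* Let $G$ and $G_0$ be cacti-graphs with $G_0$ a subgraph of $G$. Then either $G=G_0$ or there exist sequences $(P_1,\dots,P_r)$ and $(G_0,G_1,\dots,G_r)$ of subgraphs of $G$ such that $G_r=G$, every $G_i$ is a cacti-graph, and for every $i\in\{1,\dots,r\}$: $G_i=G_{i-1}\cup P_i$ with $E(P_i)\cap E(G_{i-1})=\emptyset$, where $P_i$ is a path, a cycle, a lollipop, or a bicycle, and (p) if $P_i$ is a path then $V(G_{i-1})\cap V(P_i)=End(P_i)$; (l) if $P_i$ is a lollipop then $V(G_{i-1})\cap V(P_i)=End(P_i)$; (c) if $P_i$ is a cycle then $|V(G_{i-1})\cap V(P_i)|=1$; (b) if $P_i$ is a bicycle then $V(G_{i-1})\cap V(P_i)=\emptyset$. Consequently $G_{i-1}$ is a proper subgraph of $G_i$ and $\Delta G_i-\Delta G_{i-1}=1$ for all $i$.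
   Context: Graphs are finite, may have loops and parallel edges, and have no isolated vertices unless stated otherwise. A leaf is a vertex incident to exactly one edge, which is not a loop. $\Delta G=|E(G)|-|V(G)|$. A cycle is a connected graph all of whose vertices have degree 2 (a loop contributes 2; a single vertex with a loop is a cycle). An $(x,y)$-path is a path with distinct end vertices $x,y$ and at least one edge, and $End(P)=\{x,y\}$. A lollipop is a graph obtained from a cycle $C$ (possibly a loop) and a vertex-disjoint path $P$ with end vertices $y,x$ by identifying a vertex of $C$ with $y$; $End(Q)=\{x\}$. A bicycle is a connected graph with no leaves and $\Delta=1$. A cacti-graph is a graph with no isolated vertices, no leaves, and no component that is a cycle (equivalently, no isolated vertices, no leaves, and every component contains at least two cycles). *)

theory Defs
  imports Main
begin

text \<open>Multigraphs (loops and parallel edges allowed) are represented over a fixed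
incidence map ends :: 'e => 'v set, where each edge e has ends e a set of one
(loop) or two vertices. Since all graphs considered have no isolated vertices,
a (sub)graph is determined by its edge set F; its vertex set is verts ends F.\<close>

definition verts :: "('e \<Rightarrow> 'v set) \<Rightarrow> 'e set \<Rightarrow> 'v set" where
  "verts ends F = \<Union> (ends ` F)"

text \<open>Degree: a loop contributes 2.\<close>
definition deg :: "('e \<Rightarrow> 'v set) \<Rightarrow> 'e set \<Rightarrow> 'v \<Rightarrow> nat" where
  "deg ends F v = card {e \<in> F. v \<in> ends e} + card {e \<in> F. ends e = {v}}"

definition excess :: "('e \<Rightarrow> 'v set) \<Rightarrow> 'e set \<Rightarrow> int" where
  "excess ends F = int (card F) - int (card (verts ends F))"

definition adj :: "('e \<Rightarrow> 'v set) \<Rightarrow> 'e set \<Rightarrow> 'v \<Rightarrow> 'v \<Rightarrow> bool" where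
  "adj ends F u w \<longleftrightarrow> (\<exists>e \<in> F. u \<in> ends e \<and> w \<in> ends e)"

definition connected_graph :: "('e \<Rightarrow> 'v set) \<Rightarrow> 'e set \<Rightarrow> bool" where
  "connected_graph ends F \<longleftrightarrow>
     (\<forall>u \<in> verts ends F. \<forall>w \<in> verts ends F. (adj ends F)\<^sup>*\<^sup>* u w)"

definition comp :: "('e \<Rightarrow> 'v set) \<Rightarrow> 'e set \<Rightarrow> 'v \<Rightarrow> 'e set" where
  "comp ends F v = {e \<in> F. \<exists>u \<in> ends e. (adj ends F)\<^sup>*\<^sup>* v u}"

definition is_leaf :: "('e \<Rightarrow> 'v set) \<Rightarrow> 'e set \<Rightarrow> 'v \<Rightarrow> bool" where
  "is_leaf ends F v \<longleftrightarrow> card {e \<in> F. v \<in> ends e} = 1 \<and> (\<forall>e \<in> F. ends e \<noteq> {v})"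

definition is_cycle :: "('e \<Rightarrow> 'v set) \<Rightarrow> 'e set \<Rightarrow> bool" where
  "is_cycle ends F \<longleftrightarrow> F \<noteq> {} \<and> connected_graph ends F \<and>
     (\<forall>v \<in> verts ends F. deg ends F v = 2)"

definition is_path :: "('e \<Rightarrow> 'v set) \<Rightarrow> 'e set \<Rightarrow> 'v \<Rightarrow> 'v \<Rightarrow> bool" where
  "is_path ends F x y \<longleftrightarrow>
     (\<exists>vs es. es \<noteq> [] \<and> length vs = Suc (length es) \<and> distinct vs \<and> distinct es \<and>
        (\<forall>i < length es. ends (es ! i) = {vs ! i, vs ! Suc i}) \<and>
        set es = F \<and> hd vs = x \<and> last vs = y)"

definition is_any_path :: "('e \<Rightarrow> 'v set) \<Rightarrow> 'e set \<Rightarrow> bool" where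
  "is_any_path ends F \<longleftrightarrow> (\<exists>x y. is_path ends F x y)"

definition is_lollipop :: "('e \<Rightarrow> 'v set) \<Rightarrow> 'e set \<Rightarrow> 'v \<Rightarrow> bool" where
  "is_lollipop ends F x \<longleftrightarrow>
     (\<exists>C P y. is_cycle ends C \<and> is_path ends P x y \<and> C \<inter> P = {} \<and>
        verts ends C \<inter> verts ends P = {y} \<and> F = C \<union> P)"

definition is_any_lollipop :: "('e \<Rightarrow> 'v set) \<Rightarrow> 'e set \<Rightarrow> bool" where
  "is_any_lollipop ends F \<longleftrightarrow> (\<exists>x. is_lollipop ends F x)"

definition is_bicycle :: "('e \<Rightarrow> 'v set) \<Rightarrow> 'e set \<Rightarrow> bool" where
  "is_bicycle ends F \<longleftrightarrow> connected_graph ends F \<and>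
     (\<forall>v \<in> verts ends F. \<not> is_leaf ends F v) \<and> excess ends F = 1"

text \<open>Cacti-graph: no isolated vertices (automatic in this representation),
no leaves, and no component is a cycle.\<close>
definition is_cacti :: "('e \<Rightarrow> 'v set) \<Rightarrow> 'e set \<Rightarrow> bool" where
  "is_cacti ends F \<longleftrightarrow> (\<forall>v \<in> verts ends F. \<not> is_leaf ends F v) \<and>
     (\<forall>v \<in> verts ends F. \<not> is_cycle ends (comp ends F v))"

end

theory Submission
  imports Defs
begin

text \<open>Starting from \<open>G\<^sub>0\<close>, pieces of \<open>E\<close> are attached one at a time. If some edge outside the
  current graph \<open>G\<close> touches \<open>V(G)\<close>, walk from it along unused edges: since \<open>E\<close> has no leaves
  the walk can be continued until it returns to \<open>G\<close> (a path) or runs into itself (a cycle, or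
  a lollipop whose free end lies on \<open>G\<close>). Otherwise the remaining edges form a leafless graph
  disjoint from \<open>V(G)\<close>; it contains a cycle \<open>C\<close>, which is not a component of \<open>E\<close>, and the same
  walk yields an ear of \<open>C\<close>, so that \<open>C\<close> and the ear form a bicycle.

  Every such piece \<open>Q\<close> has all its leaves on \<open>G\<close> and satisfies
  \<open>\<Delta>Q + |V(G) \<inter> V(Q)| = 1\<close>. This gives the increase of the excess by one and shows that
  \<open>G \<union> Q\<close> is again a cacti-graph. Since paths, lollipops, cycles and bicycles have
  2, 1, 0, 0 leaves and excess -1, 0, 0, 1, it also forces the contact conditions.\<close>

definition multigraph :: "('e \<Rightarrow> 'v set) \<Rightarrow> 'e set \<Rightarrow> bool" where
  "multigraph ends F \<longleftrightarrow> finite F \<and> (\<forall>e\<in>F. card (ends e) = 1 \<or> card (ends e) = 2)"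

definition leaves :: "('e \<Rightarrow> 'v set) \<Rightarrow> 'e set \<Rightarrow> 'v set" where
  "leaves ends F = {v. is_leaf ends F v}"

lemma multigraph_subset: "multigraph ends F \<Longrightarrow> G \<subseteq> F \<Longrightarrow> multigraph ends G"
  unfolding multigraph_def by (auto intro: finite_subset)

lemma multigraph_finite: "multigraph ends F \<Longrightarrow> finite F"
  by (simp add: multigraph_def)

lemma multigraph_edgeE:
  assumes "multigraph ends F" "e \<in> F" "v \<in> ends e"
  obtains "ends e = {v}" | u where "ends e = {v, u}" "u \<noteq> v"
proof -
  have "card (ends e) = 1 \<or> card (ends e) = 2"
    using assms(1,2) by (simp add: multigraph_def)
  then show thesis
  proof
    assume "card (ends e) = 1"
    then show thesis
      using assms(3) that(1) by (auto simp: card_1_singleton_iff)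
  next
    assume "card (ends e) = 2"
    then obtain a b where "ends e = {a, b}" "a \<noteq> b"
      by (auto simp: card_2_iff)
    then show thesis
      using assms(3) that(2) by (metis insert_commute insertE singletonD)
  qed
qed

lemma multigraph_ends_nonempty: "multigraph ends F \<Longrightarrow> e \<in> F \<Longrightarrow> ends e \<noteq> {}"
  unfolding multigraph_def by fastforce

lemma verts_Un [simp]: "verts ends (A \<union> B) = verts ends A \<union> verts ends B"
  and verts_insert [simp]: "verts ends (insert e A) = ends e \<union> verts ends A"
  and verts_empty [simp]: "verts ends {} = {}"
  unfolding verts_def by auto

lemma verts_mono: "A \<subseteq> B \<Longrightarrow> verts ends A \<subseteq> verts ends B"
  unfolding verts_def by auto

lemma in_verts_iff: "v \<in> verts ends F \<longleftrightarrow> (\<exists>e\<in>F. v \<in> ends e)"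
  unfolding verts_def by auto

lemma finite_verts: "multigraph ends F \<Longrightarrow> finite (verts ends F)"
  unfolding multigraph_def verts_def by (metis card_eq_0_iff finite_UN zero_neq_numeral zero_neq_one)

lemma verts_nonempty: "multigraph ends F \<Longrightarrow> F \<noteq> {} \<Longrightarrow> verts ends F \<noteq> {}"
  using multigraph_ends_nonempty by (fastforce simp: in_verts_iff)

subsection \<open>Degrees\<close>

lemma deg_Un:
  assumes "A \<inter> B = {}" "finite A" "finite B"
  shows "deg ends (A \<union> B) v = deg ends A v + deg ends B v"
proof -
  have "{e \<in> A \<union> B. v \<in> ends e} = {e \<in> A. v \<in> ends e} \<union> {e \<in> B. v \<in> ends e}"
    "{e \<in> A \<union> B. ends e = {v}} = {e \<in> A. ends e = {v}} \<union> {e \<in> B. ends e = {v}}"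
    by auto
  then show ?thesis
    unfolding deg_def using assms by (simp add: card_Un_disjoint disjoint_iff)
qed

lemma deg_insert: "e \<notin> F \<Longrightarrow> finite F \<Longrightarrow> deg ends (insert e F) v = deg ends {e} v + deg ends F v"
  using deg_Un[of "{e}" F] by simp

lemma deg_mono: "A \<subseteq> B \<Longrightarrow> finite B \<Longrightarrow> deg ends A v \<le> deg ends B v"
  unfolding deg_def by (intro add_mono card_mono) (auto intro: finite_subset)

lemma deg_eq_0_iff: "deg ends F v = 0 \<longleftrightarrow> v \<notin> verts ends F" if "finite F"
  using that unfolding deg_def in_verts_iff by auto

lemma deg_cong_incident:
  assumes "\<And>e. v \<in> ends e \<Longrightarrow> e \<in> A \<longleftrightarrow> e \<in> B"
  shows "deg ends A v = deg ends B v"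
proof -
  have "{e \<in> A. v \<in> ends e} = {e \<in> B. v \<in> ends e}" "{e \<in> A. ends e = {v}} = {e \<in> B. ends e = {v}}"
    using assms by auto
  then show ?thesis
    unfolding deg_def by simp
qed

lemma deg_edge: "ends e = {a, b} \<Longrightarrow> a \<noteq> b \<Longrightarrow> deg ends {e} v = (if v \<in> {a, b} then 1 else 0)"
  unfolding deg_def by (auto simp: Collect_conv_if doubleton_eq_iff)

lemma deg_loop: "ends e = {a} \<Longrightarrow> deg ends {e} v = (if v = a then 2 else 0)"
  unfolding deg_def by (auto simp: Collect_conv_if)

lemma is_leaf_iff_deg: "finite F \<Longrightarrow> is_leaf ends F v \<longleftrightarrow> deg ends F v = 1"
proof -
  assume "finite F"
  then have "card {e \<in> F. ends e = {v}} \<le> card {e \<in> F. v \<in> ends e}"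
    by (intro card_mono) auto
  moreover have "card {e \<in> F. ends e = {v}} = 0 \<longleftrightarrow> (\<forall>e\<in>F. ends e \<noteq> {v})"
    using \<open>finite F\<close> by auto
  ultimately show ?thesis
    unfolding is_leaf_def deg_def by linarith
qed

lemma leaves_eq: "finite F \<Longrightarrow> leaves ends F = {v. deg ends F v = 1}"
  by (simp add: leaves_def is_leaf_iff_deg)

lemma is_leaf_in_verts: "is_leaf ends F v \<Longrightarrow> v \<in> verts ends F"
  unfolding is_leaf_def in_verts_iff by (metis (mono_tags, lifting) card.empty empty_Collect_eq zero_neq_one)

lemma leaves_empty_iff: "leaves ends F = {} \<longleftrightarrow> (\<forall>v\<in>verts ends F. \<not> is_leaf ends F v)"
  by (auto simp: leaves_def dest: is_leaf_in_verts)

lemma deg_ge_2: "finite F \<Longrightarrow> v \<in> verts ends F \<Longrightarrow> v \<notin> leaves ends F \<Longrightarrow> deg ends F v \<ge> 2"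
  using deg_eq_0_iff[of F ends v] by (simp add: leaves_eq)

lemma leaves_Un_empty:
  assumes "finite G" "finite Q" "G \<inter> Q = {}" "leaves ends G = {}" "leaves ends Q \<subseteq> verts ends G"
  shows "leaves ends (G \<union> Q) = {}"
proof -
  have "deg ends (G \<union> Q) v \<noteq> 1" for v
  proof (cases "v \<in> verts ends G")
    case True
    then have "2 \<le> deg ends G v"
      by (rule deg_ge_2[OF assms(1)]) (simp add: assms(4))
    then show ?thesis
      by (simp add: deg_Un[OF assms(3,1,2)])
  next
    case False
    then have "deg ends Q v \<noteq> 1"
      using assms(5) leaves_eq[OF assms(2), of ends] by blast
    then show ?thesis
      using False deg_eq_0_iff[OF assms(1), of ends v] by (simp add: deg_Un[OF assms(3,1,2)])
  qed
  then show ?thesis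
    using assms(1,2) by (simp add: leaves_eq)
qed

lemma handshake:
  assumes "multigraph ends F"
  shows "(\<Sum>v\<in>verts ends F. deg ends F v) = 2 * card F"
proof -
  let ?V = "verts ends F"
  define inc where "inc e v = (of_bool (v \<in> ends e) + of_bool (ends e = {v}) :: nat)" for e v
  have fin: "finite F" "finite ?V"
    using assms finite_verts multigraph_finite by blast+
  have deg_sum: "deg ends F v = (\<Sum>e\<in>F. inc e v)" for v
    unfolding deg_def inc_def sum.distrib using fin(1) by (simp add: Int_def conj_commute)
  have edge_sum: "(\<Sum>v\<in>?V. inc e v) = 2" if "e \<in> F" for e
  proof -
    have "(\<Sum>v\<in>?V. inc e v) = card (?V \<inter> ends e) + card {v \<in> ?V. ends e = {v}}"
      unfolding inc_def sum.distrib using fin(2) by (simp add: Int_def)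
    also have "?V \<inter> ends e = ends e"
      using that by (auto simp: in_verts_iff)
    also have "card {v \<in> ?V. ends e = {v}} = (if card (ends e) = 1 then 1 else 0)"
      using that by (auto simp: card_1_singleton_iff in_verts_iff)
    finally show ?thesis
      using assms that by (auto simp: multigraph_def)
  qed
  have "(\<Sum>v\<in>?V. deg ends F v) = (\<Sum>e\<in>F. \<Sum>v\<in>?V. inc e v)"
    unfolding deg_sum by (rule sum.swap)
  also have "\<dots> = 2 * card F"
    using edge_sum by simp
  finally show ?thesis .
qed

lemma excess_Un:
  assumes "multigraph ends (A \<union> B)" "A \<inter> B = {}"
  shows "excess ends (A \<union> B) = excess ends A + excess ends B + int (card (verts ends A \<inter> verts ends B))"
proof -
  have "multigraph ends A" "multigraph ends B"
    using assms(1) multigraph_subset by blast+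
  then have "finite A" "finite B" "finite (verts ends A)" "finite (verts ends B)"
    using finite_verts multigraph_finite by blast+
  then show ?thesis
    unfolding excess_def using assms(2) card_Un_disjoint[of A B] card_Un_Int[of "verts ends A" "verts ends B"]
    by simp
qed

subsection \<open>Connectivity and components\<close>

lemma reach_mono: "(adj ends A)\<^sup>*\<^sup>* u w \<Longrightarrow> A \<subseteq> B \<Longrightarrow> (adj ends B)\<^sup>*\<^sup>* u w"
  using mono_rtranclp[of "adj ends A" "adj ends B"] unfolding adj_def by blast

lemma reach_sym: "(adj ends F)\<^sup>*\<^sup>* u w \<Longrightarrow> (adj ends F)\<^sup>*\<^sup>* w u"
proof -
  have "symp (adj ends F)"
    by (auto simp: symp_def adj_def)
  then show "(adj ends F)\<^sup>*\<^sup>* u w \<Longrightarrow> (adj ends F)\<^sup>*\<^sup>* w u"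
    by (meson sympD symp_rtranclp)
qed

lemma connected_Un:
  assumes "connected_graph ends A" "connected_graph ends B" "verts ends A \<inter> verts ends B \<noteq> {}"
  shows "connected_graph ends (A \<union> B)"
proof -
  obtain c where c: "c \<in> verts ends A" "c \<in> verts ends B"
    using assms(3) by blast
  have to_c: "(adj ends (A \<union> B))\<^sup>*\<^sup>* u c" if "u \<in> verts ends (A \<union> B)" for u
  proof -
    have "(adj ends A)\<^sup>*\<^sup>* u c \<or> (adj ends B)\<^sup>*\<^sup>* u c"
      using that assms(1,2) c unfolding connected_graph_def by auto
    then show ?thesis
      by (meson reach_mono sup_ge1 sup_ge2)
  qed
  show ?thesis
    unfolding connected_graph_def
  proof (intro ballI)
    fix u w
    assume "u \<in> verts ends (A \<union> B)" "w \<in> verts ends (A \<union> B)"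
    then show "(adj ends (A \<union> B))\<^sup>*\<^sup>* u w"
      using to_c reach_sym rtranclp_trans by metis
  qed
qed

lemma connected_singleton: "connected_graph ends {e}"
  unfolding connected_graph_def verts_def adj_def by auto

lemma comp_subset: "comp ends F v \<subseteq> F"
  unfolding comp_def by auto

lemma comp_memI: "e \<in> F \<Longrightarrow> u \<in> ends e \<Longrightarrow> (adj ends F)\<^sup>*\<^sup>* v u \<Longrightarrow> e \<in> comp ends F v"
  unfolding comp_def by auto

lemma reach_of_verts_comp: "u \<in> verts ends (comp ends F v) \<Longrightarrow> (adj ends F)\<^sup>*\<^sup>* v u"
proof -
  assume "u \<in> verts ends (comp ends F v)"
  then obtain e w where "e \<in> F" "u \<in> ends e" "w \<in> ends e" "(adj ends F)\<^sup>*\<^sup>* v w"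
    unfolding comp_def in_verts_iff by blast
  moreover from this have "adj ends F w u"
    unfolding adj_def by blast
  ultimately show ?thesis
    by (meson rtranclp.rtrancl_into_rtrancl)
qed

lemma deg_comp: "u \<in> verts ends (comp ends F v) \<Longrightarrow> deg ends (comp ends F v) u = deg ends F u"
proof (rule deg_cong_incident)
  fix e
  assume "u \<in> verts ends (comp ends F v)" "u \<in> ends e"
  then show "e \<in> comp ends F v \<longleftrightarrow> e \<in> F"
    using reach_of_verts_comp[of u ends F v] comp_memI[of e F u ends v] comp_subset[of ends F v]
    by blast
qed

lemma comp_connected: "connected_graph ends (comp ends F v)"
proof -
  have reach_in_comp: "(adj ends (comp ends F v))\<^sup>*\<^sup>* v u" if "(adj ends F)\<^sup>*\<^sup>* v u" for u
    using that
  proof (induction rule: rtranclp_induct)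
    case (step y z)
    from step.hyps(2) obtain e where e: "e \<in> F" "y \<in> ends e" "z \<in> ends e"
      unfolding adj_def by blast
    moreover have "e \<in> comp ends F v"
      using e(1,2) step.hyps(1) by (rule comp_memI)
    ultimately have "adj ends (comp ends F v) y z"
      unfolding adj_def by blast
    with step.IH show ?case
      by (rule rtranclp.rtrancl_into_rtrancl)
  qed simp
  show ?thesis
    unfolding connected_graph_def
  proof (intro ballI)
    fix u w
    assume "u \<in> verts ends (comp ends F v)" "w \<in> verts ends (comp ends F v)"
    then have "(adj ends (comp ends F v))\<^sup>*\<^sup>* v u" "(adj ends (comp ends F v))\<^sup>*\<^sup>* v w"
      by (meson reach_in_comp reach_of_verts_comp)+
    then show "(adj ends (comp ends F v))\<^sup>*\<^sup>* u w"
      by (rule rtranclp_trans[OF reach_sym])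
  qed
qed

lemma comp_mono: "A \<subseteq> F \<Longrightarrow> comp ends A v \<subseteq> comp ends F v"
  unfolding comp_def by (blast intro: reach_mono)

lemma comp_eq: "(adj ends F)\<^sup>*\<^sup>* v a \<Longrightarrow> comp ends F v = comp ends F a"
  unfolding comp_def by (meson reach_sym rtranclp_trans)

lemma comp_of_connected:
  assumes "connected_graph ends A" "v \<in> verts ends A" "multigraph ends A"
  shows "comp ends A v = A"
proof
  show "A \<subseteq> comp ends A v"
  proof
    fix e assume "e \<in> A"
    then obtain u where "u \<in> ends e"
      using multigraph_ends_nonempty[OF assms(3)] by blast
    with \<open>e \<in> A\<close> assms(1,2) show "e \<in> comp ends A v"
      unfolding connected_graph_def by (blast intro: comp_memI in_verts_iff[THEN iffD2])
  qed
qed (rule comp_subset)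

lemma comp_of_closed:
  assumes "C \<subseteq> F" "connected_graph ends C" "c \<in> verts ends C" "multigraph ends C"
    and closed: "\<forall>e\<in>F. ends e \<inter> verts ends C \<noteq> {} \<longrightarrow> e \<in> C"
  shows "comp ends F c = C"
proof
  have stays: "u \<in> verts ends C" if "(adj ends F)\<^sup>*\<^sup>* c u" for u
    using that
  proof (induction rule: rtranclp_induct)
    case (step y z)
    from step.hyps(2) obtain e where "e \<in> F" "y \<in> ends e" "z \<in> ends e"
      unfolding adj_def by blast
    with step.IH closed have "e \<in> C"
      by blast
    with \<open>z \<in> ends e\<close> show ?case
      by (auto simp: in_verts_iff)
  qed (rule assms(3))
  show "comp ends F c \<subseteq> C"
  proof
    fix e
    assume "e \<in> comp ends F c"
    then obtain u where "e \<in> F" "u \<in> ends e" "(adj ends F)\<^sup>*\<^sup>* c u"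
      unfolding comp_def by blast
    with stays closed show "e \<in> C"
      by blast
  qed
  show "C \<subseteq> comp ends F c"
    using comp_mono[OF assms(1), of ends c] comp_of_connected[OF assms(2-4)] by simp
qed

lemma is_cycle_comp_subgraph:
  assumes "finite F" "is_cycle ends (comp ends F v)" "A \<subseteq> F"
    and "a \<in> verts ends A" "(adj ends F)\<^sup>*\<^sup>* v a" "leaves ends A = {}"
  shows "is_cycle ends (comp ends A a)"
proof -
  let ?K = "comp ends A a"
  have "finite A"
    using assms(1,3) finite_subset by blast
  have cycle: "is_cycle ends (comp ends F a)"
    using assms(2) comp_eq[OF assms(5)] by simp
  obtain e where "e \<in> A" "a \<in> ends e"
    using assms(4) by (auto simp: in_verts_iff)
  then have "e \<in> ?K"
    by (simp add: comp_memI)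
  then have "?K \<noteq> {}"
    by blast
  moreover have "deg ends ?K u = 2" if u: "u \<in> verts ends ?K" for u
  proof -
    have uF: "u \<in> verts ends (comp ends F a)"
      using u verts_mono[OF comp_mono[OF assms(3)], of ends ends a] by blast
    have "u \<in> verts ends A"
      using u verts_mono[OF comp_subset, of ends ends A a] by blast
    then have "2 \<le> deg ends A u"
      by (rule deg_ge_2[OF \<open>finite A\<close>]) (simp add: assms(6))
    moreover have "deg ends A u \<le> deg ends F u"
      by (rule deg_mono[OF assms(3,1)])
    moreover have "deg ends (comp ends F a) u = 2"
      using cycle uF unfolding is_cycle_def by blast
    ultimately show ?thesis
      using deg_comp[OF u] deg_comp[OF uF] by simp
  qed
  ultimately show ?thesis
    unfolding is_cycle_def using comp_connected[of ends A a] by blast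
qed

lemma reach_or_apart:
  assumes "connected_graph ends Q" "v \<in> verts ends (G \<union> Q)"
  obtains a where "a \<in> verts ends G" "(adj ends (G \<union> Q))\<^sup>*\<^sup>* v a"
  | "v \<in> verts ends Q" "verts ends Q \<inter> verts ends G = {}"
proof (cases "v \<in> verts ends G")
  case True
  then show ?thesis
    using that(1) by blast
next
  case False
  then have vQ: "v \<in> verts ends Q"
    using assms(2) by simp
  show ?thesis
  proof (cases "verts ends Q \<inter> verts ends G = {}")
    case False
    then obtain a where a: "a \<in> verts ends Q" "a \<in> verts ends G"
      by blast
    then have "(adj ends Q)\<^sup>*\<^sup>* v a"
      using assms(1) vQ unfolding connected_graph_def by blast
    then have "(adj ends (G \<union> Q))\<^sup>*\<^sup>* v a"
      by (rule reach_mono) blast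
    then show ?thesis
      using that(1) a(2) by blast
  qed (use vQ that(2) in blast)
qed

subsection \<open>Paths\<close>

inductive edge_path :: "('e \<Rightarrow> 'v set) \<Rightarrow> 'e set \<Rightarrow> 'v \<Rightarrow> 'v \<Rightarrow> bool" for ends where
  edge: "ends e = {x, y} \<Longrightarrow> x \<noteq> y \<Longrightarrow> edge_path ends {e} x y"
| cons: "edge_path ends P z y \<Longrightarrow> ends e = {x, z} \<Longrightarrow> x \<notin> verts ends P \<Longrightarrow>
    edge_path ends (insert e P) x y"

lemma edge_path_props:
  "edge_path ends P x y \<Longrightarrow>
     finite P \<and> finite (verts ends P) \<and> P \<noteq> {} \<and> x \<noteq> y \<and> x \<in> verts ends P \<and> y \<in> verts ends P"
proof (induction rule: edge_path.induct)
  case (cons P z y e x)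
  then show ?case
    by auto
qed auto

lemma edge_path_new_edge: "edge_path ends P z y \<Longrightarrow> ends e = {x, z} \<Longrightarrow> x \<notin> verts ends P \<Longrightarrow> e \<notin> P"
  by (auto simp: in_verts_iff)

lemma excess_edge_path: "edge_path ends P x y \<Longrightarrow> excess ends P = -1"
proof -
  assume "edge_path ends P x y"
  then have "card (verts ends P) = Suc (card P)"
  proof (induction rule: edge_path.induct)
    case (cons P z y e x)
    moreover have "e \<notin> P"
      using cons.hyps edge_path_new_edge by metis
    moreover have "verts ends (insert e P) = insert x (verts ends P)"
      using cons.hyps edge_path_props[OF cons.hyps(1)] by auto
    ultimately show ?case
      using edge_path_props[OF cons.hyps(1)] by simp
  qed auto
  then show ?thesis
    by (simp add: excess_def)
qed

lemma deg_edge_path: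
  "edge_path ends P x y \<Longrightarrow>
     deg ends P v = (if v = x \<or> v = y then 1 else if v \<in> verts ends P then 2 else 0)"
proof (induction arbitrary: v rule: edge_path.induct)
  case (edge e x y)
  then show ?case
    by (simp add: deg_edge)
next
  case (cons P z y e x)
  have props: "finite P" "z \<noteq> y" "z \<in> verts ends P" "y \<in> verts ends P"
    using edge_path_props[OF cons.hyps(1)] by auto
  then have "deg ends (insert e P) v = deg ends {e} v + deg ends P v"
    using cons.hyps edge_path_new_edge deg_insert by metis
  moreover have "x \<noteq> z"
    using cons.hyps(3) props(3) by blast
  ultimately show ?case
    using cons props by (auto simp: deg_edge deg_eq_0_iff)
qed

lemma leaves_edge_path: "edge_path ends P x y \<Longrightarrow> leaves ends P = {x, y}"
  using deg_edge_path[of ends P x y] edge_path_props[of ends P x y] by (auto simp: leaves_eq)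

lemma edge_path_connected: "edge_path ends P x y \<Longrightarrow> connected_graph ends P"
proof (induction rule: edge_path.induct)
  case (edge e x y)
  show ?case
    by (rule connected_singleton)
next
  case (cons P z y e x)
  then have "connected_graph ends ({e} \<union> P)"
    using edge_path_props[OF cons.hyps(1)] by (intro connected_Un connected_singleton) auto
  then show ?case
    by simp
qed

lemma edge_path_snoc:
  "edge_path ends P x z \<Longrightarrow> ends e = {z, u} \<Longrightarrow> u \<notin> verts ends P \<Longrightarrow> edge_path ends (insert e P) x u"
proof (induction arbitrary: e u rule: edge_path.induct)
  case (edge e' x y)
  then have "edge_path ends {e} y u"
    by (intro edge_path.edge) auto
  then have "edge_path ends (insert e' {e}) x u"
    by (rule edge_path.cons) (use edge in \<open>auto simp: insert_commute\<close>)
  then show ?case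
    by (simp add: insert_commute)
next
  case (cons P z y e' x)
  then have "edge_path ends (insert e P) z u" "x \<notin> verts ends (insert e P)"
    using edge_path_props[OF cons.hyps(1)] by auto
  then have "edge_path ends (insert e' (insert e P)) x u"
    using cons.hyps(2) by (blast intro: edge_path.cons)
  then show ?case
    by (simp add: insert_commute)
qed

lemma edge_path_rev: "edge_path ends P x y \<Longrightarrow> edge_path ends P y x"
proof (induction rule: edge_path.induct)
  case (edge e x y)
  then show ?case
    by (intro edge_path.edge) (auto simp: insert_commute)
next
  case (cons P z y e x)
  then show ?case
    by (intro edge_path_snoc) (auto simp: insert_commute)
qed

lemma edge_path_split:
  "edge_path ends P a b \<Longrightarrow> u \<in> verts ends P \<Longrightarrow> u \<noteq> a \<Longrightarrow> u \<noteq> b \<Longrightarrow>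
     \<exists>P1 P2. edge_path ends P1 a u \<and> edge_path ends P2 u b \<and> P1 \<inter> P2 = {} \<and>
       verts ends P1 \<inter> verts ends P2 = {u} \<and> P = P1 \<union> P2"
proof (induction rule: edge_path.induct)
  case (edge e x y)
  then show ?case
    by (auto simp: verts_def)
next
  case (cons P z y e x)
  have props: "z \<in> verts ends P" "z \<noteq> y"
    using edge_path_props[OF cons.hyps(1)] by auto
  have "e \<notin> P"
    using cons.hyps edge_path_new_edge by metis
  show ?case
  proof (cases "u = z")
    case True
    then have "edge_path ends {e} x u"
      using cons props by (intro edge_path.edge) auto
    moreover have "verts ends {e} \<inter> verts ends P = {u}"
      using cons True props by auto
    ultimately show ?thesis
      using cons True \<open>e \<notin> P\<close> by (intro exI[of _ "{e}"] exI[of _ P]) auto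
  next
    case False
    then obtain P1 P2 where split: "edge_path ends P1 z u" "edge_path ends P2 u y" "P1 \<inter> P2 = {}"
      "verts ends P1 \<inter> verts ends P2 = {u}" "P = P1 \<union> P2"
      using cons by auto
    then have "edge_path ends (insert e P1) x u"
      using cons by (intro edge_path.cons) auto
    moreover have "verts ends (insert e P1) \<inter> verts ends P2 = {u}"
      using split cons props edge_path_props[OF split(1)] by auto
    ultimately show ?thesis
      using split \<open>e \<notin> P\<close> by (intro exI[of _ "insert e P1"] exI[of _ P2]) auto
  qed
qed

definition path_seq :: "('e \<Rightarrow> 'v set) \<Rightarrow> 'v list \<Rightarrow> 'e list \<Rightarrow> bool" where
  "path_seq ends vs es \<longleftrightarrow> es \<noteq> [] \<and> length vs = Suc (length es) \<and> distinct vs \<and> distinct es \<and>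
     (\<forall>i < length es. ends (es ! i) = {vs ! i, vs ! Suc i})"

lemma path_seq_singleton: "path_seq ends [a, b] [e] \<longleftrightarrow> ends e = {a, b} \<and> a \<noteq> b"
  unfolding path_seq_def by auto

lemma path_seq_ConsE:
  assumes "path_seq ends vs (e # es)"
  obtains a b vs' where "vs = a # b # vs'" "length vs' = length es"
  using assms unfolding path_seq_def by (cases vs; cases "tl vs") auto

lemma path_seq_Cons:
  assumes "es \<noteq> []"
  shows "path_seq ends (a # vs) (e # es) \<longleftrightarrow>
    path_seq ends vs es \<and> ends e = {a, hd vs} \<and> a \<notin> set vs \<and> e \<notin> set es"
proof (cases vs)
  case Nil
  then show ?thesis
    using assms by (simp add: path_seq_def)
next
  case (Cons b vs')
  then show ?thesis
    using assms unfolding path_seq_def by (simp only: All_less_Suc2 length_Cons nth_Cons_0 nth_Cons_Suc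
        distinct.simps list.sel list.simps Suc_inject) blast
qed

lemma path_seq_verts: "path_seq ends vs es \<Longrightarrow> verts ends (set es) = set vs"
proof (induction es arbitrary: vs)
  case Nil
  then show ?case
    by (simp add: path_seq_def)
next
  case (Cons e es)
  from Cons.prems obtain a b vs' where vs: "vs = a # b # vs'" "length vs' = length es"
    by (rule path_seq_ConsE)
  show ?case
  proof (cases "es = []")
    case True
    then show ?thesis
      using Cons.prems vs by (simp add: path_seq_singleton)
  next
    case False
    then have "path_seq ends (b # vs') es" "ends e = {a, b}"
      using Cons.prems unfolding vs(1) path_seq_Cons[OF False] by simp_all
    then show ?thesis
      using Cons.IH vs(1) by auto
  qed
qed

lemma edge_path_path_seq:
  "edge_path ends P x y \<Longrightarrow> \<exists>vs es. path_seq ends vs es \<and> set es = P \<and> hd vs = x \<and> last vs = y"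
proof (induction rule: edge_path.induct)
  case (edge e x y)
  then show ?case
    by (intro exI[of _ "[x, y]"] exI[of _ "[e]"]) (simp add: path_seq_singleton)
next
  case (cons P z y e x)
  then obtain vs es where seq: "path_seq ends vs es" "set es = P" "hd vs = z" "last vs = y"
    by blast
  then have "es \<noteq> []" "vs \<noteq> []"
    by (auto simp: path_seq_def)
  moreover have "e \<notin> set es"
    using cons.hyps edge_path_new_edge seq(2) by metis
  moreover have "x \<notin> set vs"
    using cons.hyps(3) path_seq_verts[OF seq(1)] seq(2) by simp
  ultimately have "path_seq ends (x # vs) (e # es)"
    using seq cons.hyps(2) by (simp add: path_seq_Cons)
  with seq \<open>vs \<noteq> []\<close> show ?case
    by (intro exI[of _ "x # vs"] exI[of _ "e # es"]) auto
qed

lemma path_seq_edge_path: "path_seq ends vs es \<Longrightarrow> edge_path ends (set es) (hd vs) (last vs)"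
proof (induction es arbitrary: vs)
  case Nil
  then show ?case
    by (simp add: path_seq_def)
next
  case (Cons e es)
  from Cons.prems obtain a b vs' where vs: "vs = a # b # vs'" "length vs' = length es"
    by (rule path_seq_ConsE)
  show ?case
  proof (cases "es = []")
    case True
    then show ?thesis
      using Cons.prems vs by (simp add: path_seq_singleton edge_path.edge)
  next
    case False
    then have seq: "path_seq ends (b # vs') es" "ends e = {a, b}" "a \<notin> set (b # vs')"
      using Cons.prems unfolding vs(1) path_seq_Cons[OF False] by simp_all
    have "edge_path ends (set es) b (last (b # vs'))"
      using Cons.IH[OF seq(1)] by simp
    then have "edge_path ends (insert e (set es)) a (last (b # vs'))"
      using seq(2) by (rule edge_path.cons) (use seq(3) in \<open>simp add: path_seq_verts[OF seq(1)]\<close>)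
    then show ?thesis
      using vs(1) by simp
  qed
qed

lemma is_path_iff_edge_path: "is_path ends P x y \<longleftrightarrow> edge_path ends P x y"
proof -
  have "is_path ends P x y \<longleftrightarrow> (\<exists>vs es. path_seq ends vs es \<and> set es = P \<and> hd vs = x \<and> last vs = y)"
    unfolding is_path_def path_seq_def by (simp only: conj_assoc)
  also have "\<dots> \<longleftrightarrow> edge_path ends P x y"
    using edge_path_path_seq path_seq_edge_path by fastforce
  finally show ?thesis .
qed

subsection \<open>Cycles, lollipops and bicycles\<close>

lemma is_cycle_loop: "ends e = {a} \<Longrightarrow> is_cycle ends {e}"
  unfolding is_cycle_def using connected_singleton[of ends e] by (auto simp: deg_loop verts_def)

lemma deg_cycle: "finite F \<Longrightarrow> is_cycle ends F \<Longrightarrow> deg ends F v = (if v \<in> verts ends F then 2 else 0)"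
  by (simp add: is_cycle_def deg_eq_0_iff)

lemma is_cycle_close_path:
  assumes "edge_path ends P a b" "e \<notin> P" "ends e = {a, b}"
  shows "is_cycle ends (insert e P)"
proof -
  have props: "finite P" "a \<noteq> b" "a \<in> verts ends P" "b \<in> verts ends P"
    using edge_path_props[OF assms(1)] by auto
  have "connected_graph ends ({e} \<union> P)"
    using assms(3) props by (intro connected_Un connected_singleton edge_path_connected[OF assms(1)]) auto
  moreover have "deg ends (insert e P) v = 2" if "v \<in> verts ends (insert e P)" for v
    using that assms props deg_insert[OF assms(2) props(1), of ends v]
    by (auto simp: deg_edge deg_edge_path[OF assms(1)])
  ultimately show ?thesis
    unfolding is_cycle_def by auto
qed

lemma leaves_cycle: "finite F \<Longrightarrow> is_cycle ends F \<Longrightarrow> leaves ends F = {}"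
  by (simp add: leaves_eq deg_cycle)

lemma excess_cycle: "multigraph ends F \<Longrightarrow> is_cycle ends F \<Longrightarrow> excess ends F = 0"
  using handshake[of ends F] by (simp add: is_cycle_def excess_def)

lemma is_lollipop_iff:
  "is_lollipop ends F x \<longleftrightarrow>
     (\<exists>C P y. is_cycle ends C \<and> edge_path ends P x y \<and> C \<inter> P = {} \<and>
        verts ends C \<inter> verts ends P = {y} \<and> F = C \<union> P)"
  unfolding is_lollipop_def is_path_iff_edge_path ..

lemma leaves_lollipop:
  assumes "multigraph ends F" "is_lollipop ends F x"
  shows "leaves ends F = {x}"
proof -
  obtain C P y where lolli: "is_cycle ends C" "edge_path ends P x y" "C \<inter> P = {}"
    "verts ends C \<inter> verts ends P = {y}" "F = C \<union> P"
    using assms(2) unfolding is_lollipop_iff by blast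
  have "finite F"
    using assms(1) by (rule multigraph_finite)
  then have "finite C" "finite P"
    using lolli(5) by simp_all
  have x: "x \<noteq> y" "x \<in> verts ends P" "x \<notin> verts ends C"
    using edge_path_props[OF lolli(2)] lolli(4) by blast+
  have "deg ends F v = 1 \<longleftrightarrow> v = x" for v
  proof -
    have "deg ends F v = deg ends C v + deg ends P v"
      unfolding lolli(5) by (rule deg_Un[OF lolli(3) \<open>finite C\<close> \<open>finite P\<close>])
    moreover have "deg ends C v = (if v \<in> verts ends C then 2 else 0)"
      by (rule deg_cycle[OF \<open>finite C\<close> lolli(1)])
    moreover have "deg ends P v = (if v = x \<or> v = y then 1 else if v \<in> verts ends P then 2 else 0)"
      by (rule deg_edge_path[OF lolli(2)])
    moreover have "y \<in> verts ends C"
      using lolli(4) by blast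
    ultimately show ?thesis
      using x by (cases "v = x"; cases "v = y"; simp)
  qed
  then show ?thesis
    using \<open>finite F\<close> by (auto simp: leaves_eq)
qed

lemma lollipop_nonempty_connected:
  assumes "is_lollipop ends F x"
  shows "F \<noteq> {} \<and> connected_graph ends F"
proof -
  obtain C P y where lolli: "is_cycle ends C" "edge_path ends P x y"
    "verts ends C \<inter> verts ends P = {y}" "F = C \<union> P"
    using assms unfolding is_lollipop_iff by blast
  then show ?thesis
    using edge_path_props[OF lolli(2)] edge_path_connected[OF lolli(2)]
    by (auto simp: is_cycle_def intro: connected_Un)
qed

lemma excess_lollipop:
  assumes "multigraph ends F" "is_lollipop ends F x"
  shows "excess ends F = 0"
proof -
  obtain C P y where lolli: "is_cycle ends C" "edge_path ends P x y" "C \<inter> P = {}"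
    "verts ends C \<inter> verts ends P = {y}" "F = C \<union> P"
    using assms(2) unfolding is_lollipop_iff by blast
  have "multigraph ends C"
    using assms(1) lolli(5) multigraph_subset by blast
  then show ?thesis
    using assms(1) lolli excess_Un[of ends C P] excess_cycle[OF \<open>multigraph ends C\<close> lolli(1)]
      excess_edge_path[OF lolli(2)] by simp
qed

lemma leaves_bicycle: "is_bicycle ends F \<Longrightarrow> leaves ends F = {}"
  by (simp add: is_bicycle_def leaves_empty_iff)

lemma bicycle_nonempty: "is_bicycle ends F \<Longrightarrow> F \<noteq> {}"
  by (auto simp: is_bicycle_def excess_def)

subsection \<open>Ears\<close>

definition ear :: "('e \<Rightarrow> 'v set) \<Rightarrow> 'v set \<Rightarrow> 'e set \<Rightarrow> bool" where
  "ear ends W Q \<longleftrightarrow>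
     (\<exists>x y. is_path ends Q x y \<and> verts ends Q \<inter> W = {x, y}) \<or>
     (is_cycle ends Q \<and> (\<exists>w. verts ends Q \<inter> W = {w})) \<or>
     (\<exists>x. is_lollipop ends Q x \<and> verts ends Q \<inter> W = {x})"

lemma ear_props:
  assumes "multigraph ends Q" "ear ends W Q"
  shows "Q \<noteq> {}" "connected_graph ends Q" "verts ends Q \<inter> W \<noteq> {}" "leaves ends Q \<subseteq> W"
    and "excess ends Q + int (card (verts ends Q \<inter> W)) = 1"
proof -
  have fin: "finite Q"
    using assms(1) by (rule multigraph_finite)
  have "Q \<noteq> {} \<and> connected_graph ends Q \<and> verts ends Q \<inter> W \<noteq> {} \<and> leaves ends Q \<subseteq> W \<and>
      excess ends Q + int (card (verts ends Q \<inter> W)) = 1"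
    using assms(2) unfolding ear_def
  proof (elim disjE exE conjE)
    fix x y
    assume "is_path ends Q x y" and meet: "verts ends Q \<inter> W = {x, y}"
    then have path: "edge_path ends Q x y"
      by (simp add: is_path_iff_edge_path)
    then show ?thesis
      using edge_path_props[OF path] edge_path_connected[OF path] leaves_edge_path[OF path]
        excess_edge_path[OF path] meet by auto
  next
    fix w
    assume cycle: "is_cycle ends Q" and meet: "verts ends Q \<inter> W = {w}"
    then show ?thesis
      using leaves_cycle[OF fin cycle] excess_cycle[OF assms(1) cycle] by (auto simp: is_cycle_def)
  next
    fix x
    assume lolli: "is_lollipop ends Q x" and meet: "verts ends Q \<inter> W = {x}"
    then show ?thesis
      using lollipop_nonempty_connected[OF lolli] leaves_lollipop[OF assms(1) lolli]
        excess_lollipop[OF assms(1) lolli] by auto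
  qed
  then show "Q \<noteq> {}" "connected_graph ends Q" "verts ends Q \<inter> W \<noteq> {}" "leaves ends Q \<subseteq> W"
    and "excess ends Q + int (card (verts ends Q \<inter> W)) = 1"
    by blast+
qed

lemma lollipop_loop_path:
  assumes "edge_path ends P v w" "e \<notin> P" "ends e = {v}"
  shows "is_lollipop ends (insert e P) w"
proof -
  have "v \<in> verts ends P"
    using edge_path_props[OF assms(1)] by blast
  then have "verts ends {e} \<inter> verts ends P = {v}"
    using assms(3) by auto
  then have "is_lollipop ends ({e} \<union> P) w"
    unfolding is_lollipop_iff
    using is_cycle_loop[of ends e v, OF assms(3)] edge_path_rev[OF assms(1)] assms(2) by blast
  then show ?thesis
    by simp
qed

lemma lollipop_chord_path:
  assumes "edge_path ends P v w" "e \<notin> P" "ends e = {v, u}" "u \<in> verts ends P" "u \<noteq> v" "u \<noteq> w"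
  shows "is_lollipop ends (insert e P) w"
proof -
  obtain P1 P2 where split: "edge_path ends P1 v u" "edge_path ends P2 u w" "P1 \<inter> P2 = {}"
    "verts ends P1 \<inter> verts ends P2 = {u}" "P = P1 \<union> P2"
    using edge_path_split[OF assms(1,4)] assms(5,6) by metis
  have "e \<notin> P1" "e \<notin> P2"
    using assms(2) split(5) by blast+
  then have "is_cycle ends (insert e P1)"
    using is_cycle_close_path[OF split(1)] assms(3) by blast
  moreover have "v \<in> verts ends P1"
    using edge_path_props[OF split(1)] by blast
  then have "verts ends (insert e P1) \<inter> verts ends P2 = {u}"
    using split(4) assms(3) by auto
  moreover have "insert e P1 \<inter> P2 = {}"
    using split(3) \<open>e \<notin> P2\<close> by blast
  ultimately have "is_lollipop ends (insert e P1 \<union> P2) w"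
    unfolding is_lollipop_iff using edge_path_rev[OF split(2)] by blast
  then show ?thesis
    using split(5) by simp
qed

lemma ear_close_path:
  assumes "multigraph ends (insert e P)" "edge_path ends P v w" "e \<notin> P"
    and "v \<in> ends e" "ends e \<subseteq> verts ends P" "verts ends P \<inter> W = {w}"
  shows "ear ends W (insert e P)"
proof -
  have meet: "verts ends (insert e P) \<inter> W = {w}"
    using assms(5,6) by auto
  have "is_cycle ends (insert e P) \<or> is_lollipop ends (insert e P) w"
  proof (rule multigraph_edgeE[OF assms(1) insertI1 assms(4)])
    assume "ends e = {v}"
    then show ?thesis
      using lollipop_loop_path[OF assms(2,3)] by blast
  next
    fix u
    assume e: "ends e = {v, u}" "u \<noteq> v"
    then have "u \<in> verts ends P"
      using assms(5) by simp
    then show ?thesis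
      using is_cycle_close_path[OF assms(2,3)] lollipop_chord_path[OF assms(2,3) e(1)] e by blast
  qed
  then show ?thesis
    unfolding ear_def using meet by blast
qed

lemma leafless_edge_outside:
  assumes "finite F" "leaves ends F = {}" "A \<subseteq> F" "deg ends A v = 1"
  obtains e where "e \<in> F - A" "v \<in> ends e"
proof -
  have "finite A"
    using assms(1,3) finite_subset by blast
  then have "v \<in> verts ends A"
    using deg_eq_0_iff[of A ends v] assms(4) by simp
  then have "v \<in> verts ends F"
    using verts_mono[OF assms(3), of ends] by blast
  then have "2 \<le> deg ends F v"
    by (rule deg_ge_2[OF assms(1)]) (simp add: assms(2))
  moreover have "deg ends (A \<union> (F - A)) v = deg ends A v + deg ends (F - A) v"
    by (rule deg_Un) (use \<open>finite A\<close> assms(1) in auto)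
  moreover have "A \<union> (F - A) = F"
    using assms(3) by blast
  ultimately have "deg ends (F - A) v \<noteq> 0"
    using assms(4) by simp
  then have "v \<in> verts ends (F - A)"
    using deg_eq_0_iff[of "F - A" ends v] assms(1) by simp
  then show ?thesis
    using that by (auto simp: in_verts_iff)
qed

lemma ear_or_longer_path:
  assumes "multigraph ends F" "leaves ends F = {}" "H \<subseteq> F"
    and closed: "\<forall>e\<in>F. \<forall>v\<in>ends e. v \<notin> W \<longrightarrow> e \<in> H"
    and path: "edge_path ends P v w" and "P \<subseteq> H" and meet: "verts ends P \<inter> W = {w}"
  shows "(\<exists>Q\<subseteq>H. ear ends W Q) \<or>
    (\<exists>e u. e \<in> H - P \<and> edge_path ends (insert e P) u w \<and> verts ends (insert e P) \<inter> W = {w})"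
proof -
  have props: "v \<noteq> w" "v \<in> verts ends P"
    using edge_path_props[OF path] by blast+
  then have "v \<notin> W"
    using meet by blast
  have "deg ends P v = 1"
    using deg_edge_path[OF path, of v] by simp
  moreover have "P \<subseteq> F"
    using assms(3,6) by blast
  ultimately obtain e where e: "e \<in> F - P" "v \<in> ends e"
    using leafless_edge_outside[OF multigraph_finite[OF assms(1)] assms(2)] by blast
  then have eH: "e \<in> H - P" and grow: "insert e P \<subseteq> H"
    using closed \<open>v \<notin> W\<close> assms(6) by blast+
  show ?thesis
  proof (cases "ends e \<subseteq> verts ends P")
    case True
    have "multigraph ends (insert e P)"
      using multigraph_subset[OF assms(1)] grow assms(3) by blast
    then have "ear ends W (insert e P)"
      using ear_close_path[OF _ path _ e(2) True meet] e(1) by blast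
    then show ?thesis
      using grow by blast
  next
    case False
    then obtain u where u: "ends e = {v, u}" "u \<notin> verts ends P"
      using multigraph_edgeE[of ends F e v] assms(1) e props(2) by auto
    have path': "edge_path ends (insert e P) u w"
      using path u by (intro edge_path.cons) (auto simp: insert_commute)
    show ?thesis
    proof (cases "u \<in> W")
      case True
      then have "verts ends (insert e P) \<inter> W = {u, w}"
        using u(1) meet \<open>v \<notin> W\<close> by auto
      then have "ear ends W (insert e P)"
        unfolding ear_def is_path_iff_edge_path using path' by blast
      then show ?thesis
        using grow by blast
    next
      case False
      then have "verts ends (insert e P) \<inter> W = {w}"
        using u(1) meet \<open>v \<notin> W\<close> by auto
      then show ?thesis
        using eH path' by blast
    qed
  qed
qed

lemma ear_from_path:
  assumes "multigraph ends F" "leaves ends F = {}" "H \<subseteq> F"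
    and closed: "\<forall>e\<in>F. \<forall>v\<in>ends e. v \<notin> W \<longrightarrow> e \<in> H"
  shows "edge_path ends P v w \<Longrightarrow> P \<subseteq> H \<Longrightarrow> verts ends P \<inter> W = {w} \<Longrightarrow> \<exists>Q\<subseteq>H. ear ends W Q"
proof (induction "card (verts ends F) - card (verts ends P)" arbitrary: P v rule: less_induct)
  case less
  from ear_or_longer_path[OF assms less.prems] show ?case
  proof (elim disjE exE conjE)
    fix e u
    assume e: "e \<in> H - P" and path': "edge_path ends (insert e P) u w"
      and meet': "verts ends (insert e P) \<inter> W = {w}"
    have "finite P"
      using edge_path_props[OF less.prems(1)] by blast
    then have "card (verts ends (insert e P)) = Suc (card (verts ends P))"
      using excess_edge_path[OF less.prems(1)] excess_edge_path[OF path'] e by (simp add: excess_def)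
    moreover have "card (verts ends (insert e P)) \<le> card (verts ends F)"
      using e less.prems(2) assms(3) finite_verts[OF assms(1)]
      by (intro card_mono verts_mono) auto
    ultimately show ?thesis
      using less.hyps path' meet' e less.prems(2) by (metis Diff_iff Suc_le_lessD diff_less_mono2 insert_subset lessI)
  qed blast
qed

lemma ear_from_edge:
  assumes "multigraph ends F" "leaves ends F = {}" "H \<subseteq> F"
    and closed: "\<forall>e\<in>F. \<forall>v\<in>ends e. v \<notin> W \<longrightarrow> e \<in> H"
    and "e \<in> H" "a \<in> ends e" "a \<in> W"
  shows "\<exists>Q\<subseteq>H. ear ends W Q"
proof (rule multigraph_edgeE[of ends F e a])
  assume "ends e = {a}"
  then have "ear ends W {e}"
    unfolding ear_def using is_cycle_loop[of ends e a] assms(7) by auto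
  then show ?thesis
    using assms(5) by blast
next
  fix u
  assume e: "ends e = {a, u}" "u \<noteq> a"
  show ?thesis
  proof (cases "u \<in> W")
    case True
    have "edge_path ends {e} a u"
      using e by (intro edge_path.edge) auto
    then have "ear ends W {e}"
      unfolding ear_def is_path_iff_edge_path using e(1) True assms(7) by auto
    then show ?thesis
      using assms(5) by blast
  next
    case False
    have "edge_path ends {e} u a"
      using e by (intro edge_path.edge) (auto simp: insert_commute)
    moreover have "verts ends {e} \<inter> W = {a}"
      using e(1) False assms(7) by auto
    ultimately show ?thesis
      using ear_from_path[OF assms(1-4)] assms(5) by blast
  qed
qed (use assms in auto)

lemma ear_close_edge_cycle:
  assumes "ear ends {a, b} Q" "ends e = {a, b}" "e \<notin> Q"
  obtains C where "C \<subseteq> insert e Q" "is_cycle ends C"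
  using assms(1) unfolding ear_def
proof (elim disjE exE conjE)
  fix x y
  assume "is_path ends Q x y" and meet: "verts ends Q \<inter> {a, b} = {x, y}"
  then have path: "edge_path ends Q x y"
    by (simp add: is_path_iff_edge_path)
  have "x \<noteq> y"
    using edge_path_props[OF path] by blast
  moreover have "x \<in> {a, b}" "y \<in> {a, b}"
    using meet by blast+
  ultimately have "ends e = {x, y}"
    using assms(2) by auto
  then have "is_cycle ends (insert e Q)"
    using is_cycle_close_path[OF path assms(3)] by blast
  then show thesis
    using that by blast
next
  assume "is_cycle ends Q"
  then show thesis
    using that by blast
next
  fix x
  assume "is_lollipop ends Q x"
  then obtain C P y where "is_cycle ends C" "Q = C \<union> P"
    unfolding is_lollipop_iff by blast
  then show thesis
    using that by blast
qed

lemma leafless_has_cycle: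
  assumes "multigraph ends F" "leaves ends F = {}" "F \<noteq> {}"
  obtains C where "C \<subseteq> F" "is_cycle ends C"
proof -
  obtain e0 where "e0 \<in> F"
    using assms(3) by blast
  moreover obtain a where "a \<in> ends e0"
    using multigraph_ends_nonempty[OF assms(1) \<open>e0 \<in> F\<close>] by blast
  ultimately have e0: "e0 \<in> F" "a \<in> ends e0"
    by blast+
  show ?thesis
  proof (rule multigraph_edgeE[OF assms(1) e0])
    assume "ends e0 = {a}"
    then show ?thesis
      using that is_cycle_loop[of ends e0 a] e0(1) by blast
  next
    fix b
    assume ab: "ends e0 = {a, b}" "b \<noteq> a"
    then have "deg ends {e0} a = 1"
      by (simp add: deg_edge)
    moreover have "{e0} \<subseteq> F"
      using e0(1) by blast
    ultimately obtain e where e: "e \<in> F - {e0}" "a \<in> ends e"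
      using leafless_edge_outside[OF multigraph_finite[OF assms(1)] assms(2)] by blast
    have closed: "\<forall>e\<in>F. \<forall>v\<in>ends e. v \<notin> {a, b} \<longrightarrow> e \<in> F - {e0}"
      using ab(1) by auto
    obtain Q where Q: "Q \<subseteq> F - {e0}" "ear ends {a, b} Q"
      using ear_from_edge[OF assms(1,2) Diff_subset closed e insertI1] by blast
    then have "e0 \<notin> Q" "insert e0 Q \<subseteq> F"
      using e0(1) by blast+
    moreover obtain C where "C \<subseteq> insert e0 Q" "is_cycle ends C"
      using ear_close_edge_cycle[OF Q(2) ab(1) \<open>e0 \<notin> Q\<close>] by blast
    ultimately show ?thesis
      using that by blast
  qed
qed

lemma bicycle_cycle_ear:
  assumes "multigraph ends (C \<union> Q)" "is_cycle ends C" "ear ends (verts ends C) Q" "C \<inter> Q = {}"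
  shows "is_bicycle ends (C \<union> Q)"
proof -
  have mC: "multigraph ends C" and mQ: "multigraph ends Q"
    using assms(1) multigraph_subset by blast+
  note ear = ear_props[OF mQ assms(3)]
  have "connected_graph ends (C \<union> Q)"
    using ear(2,3) assms(2) by (intro connected_Un) (auto simp: is_cycle_def)
  moreover have "leaves ends (C \<union> Q) = {}"
    using mC mQ assms(2,4) ear(4) by (intro leaves_Un_empty) (simp_all add: multigraph_finite leaves_cycle)
  moreover have "excess ends (C \<union> Q) = 1"
    using excess_Un[OF assms(1,4)] excess_cycle[OF mC assms(2)] ear(5) by (simp add: Int_commute)
  ultimately show ?thesis
    unfolding is_bicycle_def by (simp add: leaves_empty_iff)
qed

subsection \<open>Attaching a piece\<close>

definition attachment :: "('e \<Rightarrow> 'v set) \<Rightarrow> 'v set \<Rightarrow> 'e set \<Rightarrow> bool" where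
  "attachment ends W Q \<longleftrightarrow> ear ends W Q \<or> (is_bicycle ends Q \<and> verts ends Q \<inter> W = {})"

lemma attachment_props:
  assumes "multigraph ends Q" "attachment ends W Q"
  shows "Q \<noteq> {}" "connected_graph ends Q" "leaves ends Q \<subseteq> W"
    and "excess ends Q + int (card (verts ends Q \<inter> W)) = 1"
proof -
  have "Q \<noteq> {} \<and> connected_graph ends Q \<and> leaves ends Q \<subseteq> W \<and>
      excess ends Q + int (card (verts ends Q \<inter> W)) = 1"
    using assms(2) unfolding attachment_def
  proof
    assume "ear ends W Q"
    then show ?thesis
      using ear_props[OF assms(1)] by blast
  next
    assume bicycle: "is_bicycle ends Q \<and> verts ends Q \<inter> W = {}"
    then have "connected_graph ends Q" "excess ends Q = 1"
      by (simp_all add: is_bicycle_def)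
    then show ?thesis
      using bicycle leaves_bicycle[of ends Q] bicycle_nonempty[of ends Q] by simp
  qed
  then show "Q \<noteq> {}" "connected_graph ends Q" "leaves ends Q \<subseteq> W"
    and "excess ends Q + int (card (verts ends Q \<inter> W)) = 1"
    by blast+
qed

lemma attachment_contact:
  assumes "multigraph ends Q" "leaves ends Q \<subseteq> W"
    and count: "excess ends Q + int (card (W \<inter> verts ends Q)) = 1"
  shows "\<forall>x y. is_path ends Q x y \<longrightarrow> W \<inter> verts ends Q = {x, y}"
    and "\<forall>x. is_lollipop ends Q x \<longrightarrow> W \<inter> verts ends Q = {x}"
    and "is_cycle ends Q \<longrightarrow> card (W \<inter> verts ends Q) = 1"
    and "is_bicycle ends Q \<longrightarrow> W \<inter> verts ends Q = {}"
proof -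
  have fin: "finite (W \<inter> verts ends Q)"
    using finite_verts[OF assms(1)] by blast
  have leaves_meet: "leaves ends Q \<subseteq> W \<inter> verts ends Q"
    using assms(2) is_leaf_in_verts by (auto simp: leaves_def)
  show "\<forall>x y. is_path ends Q x y \<longrightarrow> W \<inter> verts ends Q = {x, y}"
  proof (intro allI impI)
    fix x y
    assume "is_path ends Q x y"
    then have path: "edge_path ends Q x y"
      by (simp add: is_path_iff_edge_path)
    then have "card (W \<inter> verts ends Q) = card {x, y}"
      using count excess_edge_path edge_path_props by fastforce
    then show "W \<inter> verts ends Q = {x, y}"
      using leaves_meet leaves_edge_path[OF path] fin by (metis card_subset_eq)
  qed
  show "\<forall>x. is_lollipop ends Q x \<longrightarrow> W \<inter> verts ends Q = {x}"
  proof (intro allI impI)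
    fix x
    assume lolli: "is_lollipop ends Q x"
    then have "card (W \<inter> verts ends Q) = card {x}"
      using count excess_lollipop[OF assms(1)] by simp
    then show "W \<inter> verts ends Q = {x}"
      using leaves_meet leaves_lollipop[OF assms(1) lolli] fin by (metis card_subset_eq)
  qed
  show "is_cycle ends Q \<longrightarrow> card (W \<inter> verts ends Q) = 1"
    using count excess_cycle[OF assms(1)] by auto
  show "is_bicycle ends Q \<longrightarrow> W \<inter> verts ends Q = {}"
    using count fin by (auto simp: is_bicycle_def)
qed

lemma is_cacti_iff: "is_cacti ends F \<longleftrightarrow> leaves ends F = {} \<and> (\<forall>v\<in>verts ends F. \<not> is_cycle ends (comp ends F v))"
  by (simp add: is_cacti_def leaves_empty_iff)

lemma attachment_cacti:
  assumes "multigraph ends (G \<union> Q)" "Q \<inter> G = {}" "is_cacti ends G" "attachment ends (verts ends G) Q"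
  shows "is_cacti ends (G \<union> Q)"
proof -
  have mQ: "multigraph ends Q" and fG: "finite G" and fQ: "finite Q" and fGQ: "finite (G \<union> Q)"
    using assms(1) multigraph_subset multigraph_finite by blast+
  note Q = attachment_props[OF mQ assms(4)]
  have G: "leaves ends G = {}" "\<forall>v\<in>verts ends G. \<not> is_cycle ends (comp ends G v)"
    using assms(3) by (simp_all add: is_cacti_iff)
  have "leaves ends (G \<union> Q) = {}"
    using fG fQ assms(2) G(1) Q(3) by (intro leaves_Un_empty) auto
  moreover have "\<not> is_cycle ends (comp ends (G \<union> Q) v)" if v: "v \<in> verts ends (G \<union> Q)" for v
  proof
    assume cycle: "is_cycle ends (comp ends (G \<union> Q) v)"
    from Q(2) v show False
    proof (rule reach_or_apart)
      fix a
      assume "a \<in> verts ends G" "(adj ends (G \<union> Q))\<^sup>*\<^sup>* v a"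
      then show False
        using is_cycle_comp_subgraph[OF fGQ cycle _ _ _ G(1)] G(2) by blast
    next
      assume vQ: "v \<in> verts ends Q" and apart: "verts ends Q \<inter> verts ends G = {}"
      then have "leaves ends Q = {}"
        using Q(3) is_leaf_in_verts by (fastforce simp: leaves_def)
      then have "is_cycle ends (comp ends Q v)"
        using is_cycle_comp_subgraph[OF fGQ cycle _ vQ] by blast
      then have "is_cycle ends Q"
        using comp_of_connected[OF Q(2) vQ mQ] by simp
      then show False
        using excess_cycle[OF mQ] Q(4) apart by simp
    qed
  qed
  ultimately show ?thesis
    by (simp add: is_cacti_iff)
qed
lemma leaves_incidence_closed:
  assumes "finite E" "leaves ends E = {}" "H \<subseteq> E"
    and closed: "\<forall>e\<in>E. ends e \<inter> verts ends H \<noteq> {} \<longrightarrow> e \<in> H"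
  shows "leaves ends H = {}"
proof -
  have "finite H"
    using assms(1,3) finite_subset by blast
  have "deg ends H v \<noteq> 1" for v
  proof (cases "v \<in> verts ends H")
    case True
    then have "deg ends H v = deg ends E v"
      using assms(3) closed by (intro deg_cong_incident) blast
    then show ?thesis
      using assms(1,2) by (auto simp: leaves_eq)
  next
    case False
    then show ?thesis
      using deg_eq_0_iff[OF \<open>finite H\<close>, of ends v] by simp
  qed
  then show ?thesis
    using \<open>finite H\<close> by (simp add: leaves_eq)
qed

lemma cacti_cycle_exit:
  assumes "multigraph ends E" "is_cacti ends E" "C \<subseteq> E" "is_cycle ends C"
  obtains e a where "e \<in> E - C" "a \<in> ends e" "a \<in> verts ends C"
proof -
  have mC: "multigraph ends C"
    using assms(1,3) multigraph_subset by blast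
  obtain c where c: "c \<in> verts ends C"
    using verts_nonempty[OF mC] assms(4) by (auto simp: is_cycle_def)
  have "\<exists>e\<in>E - C. ends e \<inter> verts ends C \<noteq> {}"
  proof (rule ccontr)
    assume "\<not> ?thesis"
    then have closed: "\<forall>e\<in>E. ends e \<inter> verts ends C \<noteq> {} \<longrightarrow> e \<in> C"
      by blast
    have "connected_graph ends C"
      using assms(4) by (simp add: is_cycle_def)
    then have "comp ends E c = C"
      using comp_of_closed[OF assms(3) _ c mC closed] by blast
    moreover have "c \<in> verts ends E"
      using c verts_mono[OF assms(3), of ends] by blast
    ultimately show False
      using assms(2,4) by (auto simp: is_cacti_def)
  qed
  then show ?thesis
    using that by blast
qed

lemma cacti_incidence_closed_bicycle:
  assumes "multigraph ends E" "is_cacti ends E" "H \<subseteq> E" "H \<noteq> {}"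
    and closed: "\<forall>e\<in>E. ends e \<inter> verts ends H \<noteq> {} \<longrightarrow> e \<in> H"
  obtains B where "B \<subseteq> H" "is_bicycle ends B"
proof -
  have mH: "multigraph ends H"
    using assms(1,3) multigraph_subset by blast
  have leafless: "leaves ends H = {}"
    using leaves_incidence_closed[OF multigraph_finite[OF assms(1)] _ assms(3) closed] assms(2)
    by (simp add: is_cacti_iff)
  then obtain C where C: "C \<subseteq> H" "is_cycle ends C"
    using leafless_has_cycle[OF mH _ assms(4)] by blast
  have "C \<subseteq> E"
    using C(1) assms(3) by blast
  then obtain e a where e: "e \<in> E - C" "a \<in> ends e" "a \<in> verts ends C"
    using cacti_cycle_exit[OF assms(1,2) _ C(2)] by blast
  then have eH: "e \<in> H - C"
    using closed verts_mono[OF C(1), of ends] by blast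
  have closedC: "\<forall>e\<in>H. \<forall>v\<in>ends e. v \<notin> verts ends C \<longrightarrow> e \<in> H - C"
    by (auto simp: in_verts_iff)
  obtain Q where Q: "Q \<subseteq> H - C" "ear ends (verts ends C) Q"
    using ear_from_edge[OF mH leafless Diff_subset closedC eH e(2,3)] by blast
  have sub: "C \<union> Q \<subseteq> H" and "C \<inter> Q = {}"
    using C(1) Q(1) by blast+
  then have "is_bicycle ends (C \<union> Q)"
    by (intro bicycle_cycle_ear[OF multigraph_subset[OF mH sub] C(2) Q(2)])
  with sub show ?thesis
    by (rule that)
qed

lemma exists_attachment:
  assumes "multigraph ends E" "is_cacti ends E" "G \<subseteq> E" "G \<noteq> E"
  obtains Q where "Q \<subseteq> E - G" "attachment ends (verts ends G) Q"
proof (cases "\<exists>e\<in>E - G. \<exists>a\<in>ends e. a \<in> verts ends G")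
  case True
  have "leaves ends E = {}"
    using assms(2) by (simp add: is_cacti_iff)
  moreover have "\<forall>e\<in>E. \<forall>v\<in>ends e. v \<notin> verts ends G \<longrightarrow> e \<in> E - G"
    by (auto simp: in_verts_iff)
  ultimately show ?thesis
    using True ear_from_edge[OF assms(1) _ Diff_subset] that unfolding attachment_def by blast
next
  case False
  then have apart: "verts ends (E - G) \<inter> verts ends G = {}"
    unfolding verts_def[of ends "E - G"] by blast
  have "e \<notin> G" if "v \<in> ends e" "v \<in> verts ends (E - G)" for e v
  proof
    assume "e \<in> G"
    then have "v \<in> verts ends G"
      using that(1) by (auto simp: in_verts_iff)
    then show False
      using apart that(2) by blast
  qed
  then have closed: "\<forall>e\<in>E. ends e \<inter> verts ends (E - G) \<noteq> {} \<longrightarrow> e \<in> E - G"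
    by blast
  have "E - G \<noteq> {}"
    using assms(3,4) by blast
  then obtain B where B: "B \<subseteq> E - G" "is_bicycle ends B"
    using cacti_incidence_closed_bicycle[OF assms(1,2) Diff_subset _ closed] by blast
  have "verts ends B \<subseteq> verts ends (E - G)"
    using B(1) by (rule verts_mono)
  then have "verts ends B \<inter> verts ends G = {}"
    using apart by blast
  with B have "attachment ends (verts ends G) B"
    by (simp add: attachment_def)
  with B(1) show ?thesis
    by (rule that)
qed

definition attach_step :: "('e \<Rightarrow> 'v set) \<Rightarrow> 'e set \<Rightarrow> 'e set \<Rightarrow> 'e set \<Rightarrow> bool" where
  "attach_step ends E G G' \<longleftrightarrow>
     G \<subseteq> G' \<and> G' \<subseteq> E \<and> is_cacti ends G' \<and> attachment ends (verts ends G) (G' - G)"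

lemma attach_steps_reach:
  assumes "multigraph ends E" "is_cacti ends E"
  shows "is_cacti ends G \<Longrightarrow> G \<subseteq> E \<Longrightarrow> (attach_step ends E)\<^sup>*\<^sup>* G E"
proof (induction "card (E - G)" arbitrary: G rule: less_induct)
  case less
  show ?case
  proof (cases "G = E")
    case False
    then obtain Q where Q: "Q \<subseteq> E - G" "attachment ends (verts ends G) Q"
      using exists_attachment[OF assms less.prems(2)] by blast
    have "multigraph ends (G \<union> Q)"
      using assms(1) less.prems(2) Q(1) multigraph_subset by blast
    moreover have "Q \<inter> G = {}"
      using Q(1) by blast
    ultimately have "is_cacti ends (G \<union> Q)"
      using attachment_cacti less.prems(1) Q(2) by blast
    moreover have "(G \<union> Q) - G = Q"
      using Q(1) by blast
    ultimately have step: "attach_step ends E G (G \<union> Q)"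
      unfolding attach_step_def using Q less.prems(2) by auto
    have "Q \<noteq> {}"
      using attachment_props(1) Q(2) multigraph_subset[OF assms(1)] Q(1) by blast
    then have "card (E - (G \<union> Q)) < card (E - G)"
      using Q(1) multigraph_finite[OF assms(1)] by (intro psubset_card_mono) auto
    then have "(attach_step ends E)\<^sup>*\<^sup>* (G \<union> Q) E"
      using less.hyps \<open>is_cacti ends (G \<union> Q)\<close> less.prems(2) Q(1) by blast
    with step show ?thesis
      by (rule converse_rtranclp_into_rtranclp)
  qed simp
qed

lemma attach_step_conditions:
  assumes "multigraph ends E" "attach_step ends E G G'" "P = G' - G"
  shows "P \<subseteq> E \<and> G' = G \<union> P \<and> P \<inter> G = {} \<and>
    (is_any_path ends P \<or> is_cycle ends P \<or> is_any_lollipop ends P \<or> is_bicycle ends P) \<and>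
    (\<forall>x y. is_path ends P x y \<longrightarrow> verts ends G \<inter> verts ends P = {x, y}) \<and>
    (\<forall>x. is_lollipop ends P x \<longrightarrow> verts ends G \<inter> verts ends P = {x}) \<and>
    (is_cycle ends P \<longrightarrow> card (verts ends G \<inter> verts ends P) = 1) \<and>
    (is_bicycle ends P \<longrightarrow> verts ends G \<inter> verts ends P = {}) \<and>
    G \<subset> G' \<and> excess ends G' - excess ends G = 1"
proof -
  have step: "G \<subseteq> G'" "G' \<subseteq> E" "attachment ends (verts ends G) P"
    using assms(2,3) by (simp_all add: attach_step_def)
  have P: "P \<subseteq> E" "G' = G \<union> P" "P \<inter> G = {}"
    using step(1,2) assms(3) by auto
  have mP: "multigraph ends P" and mG': "multigraph ends (G \<union> P)"
    using multigraph_subset[OF assms(1)] P(1,2) step(2) by auto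
  note props = attachment_props[OF mP step(3)]
  have count: "excess ends P + int (card (verts ends G \<inter> verts ends P)) = 1"
    using props(4) by (simp add: Int_commute)
  have "G \<subset> G'"
    using P(2,3) props(1) by blast
  moreover have "excess ends G' - excess ends G = 1"
    using excess_Un[OF mG'] P(2,3) count by (simp add: Int_commute)
  moreover have "is_any_path ends P \<or> is_cycle ends P \<or> is_any_lollipop ends P \<or> is_bicycle ends P"
    using step(3)
    unfolding attachment_def ear_def is_any_path_def is_any_lollipop_def by blast
  ultimately show ?thesis
    using P attachment_contact[OF mP props(3) count] by (intro conjI) assumption+
qed

theorem mainTheorem4:
  fixes ends :: "'e \<Rightarrow> 'v set" and E E0 :: "'e set"
  assumes "finite E"
    and "\<forall>e \<in> E. card (ends e) = 1 \<or> card (ends e) = 2"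
    and "is_cacti ends E" and "is_cacti ends E0" and "E0 \<subseteq> E"
  shows "E = E0 \<or>
    (\<exists>(r::nat) (P::nat \<Rightarrow> 'e set) (Gs::nat \<Rightarrow> 'e set).
       Gs 0 = E0 \<and> Gs r = E \<and>
       (\<forall>i \<le> r. Gs i \<subseteq> E \<and> is_cacti ends (Gs i)) \<and>
       (\<forall>i \<in> {1..r}.
          P i \<subseteq> E \<and> Gs i = Gs (i - 1) \<union> P i \<and> P i \<inter> Gs (i - 1) = {} \<and>
          (is_any_path ends (P i) \<or> is_cycle ends (P i) \<or>
           is_any_lollipop ends (P i) \<or> is_bicycle ends (P i)) \<and>
          (\<forall>x y. is_path ends (P i) x y \<longrightarrow>
             verts ends (Gs (i - 1)) \<inter> verts ends (P i) = {x, y}) \<and>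
          (\<forall>x. is_lollipop ends (P i) x \<longrightarrow>
             verts ends (Gs (i - 1)) \<inter> verts ends (P i) = {x}) \<and>
          (is_cycle ends (P i) \<longrightarrow>
             card (verts ends (Gs (i - 1)) \<inter> verts ends (P i)) = 1) \<and>
          (is_bicycle ends (P i) \<longrightarrow>
             verts ends (Gs (i - 1)) \<inter> verts ends (P i) = {}) \<and>
          Gs (i - 1) \<subset> Gs i \<and>
          excess ends (Gs i) - excess ends (Gs (i - 1)) = 1))"
proof -
  have E: "multigraph ends E"
    using assms(1,2) by (simp add: multigraph_def)
  then have "(attach_step ends E)\<^sup>*\<^sup>* E0 E"
    using assms(3-5) by (rule attach_steps_reach)
  then obtain r Gs where Gs: "Gs 0 = E0" "Gs r = E" "\<forall>i<r. attach_step ends E (Gs i) (Gs (Suc i))"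
    unfolding rtranclp_power relpowp_fun_conv by blast
  have step: "attach_step ends E (Gs (i - 1)) (Gs i)" if "i \<in> {1..r}" for i
  proof -
    have "i - 1 < r" "Suc (i - 1) = i"
      using that by auto
    then show ?thesis
      using Gs(3) by metis
  qed
  have "\<forall>i\<le>r. Gs i \<subseteq> E \<and> is_cacti ends (Gs i)"
  proof (intro allI impI)
    fix i
    assume "i \<le> r"
    then show "Gs i \<subseteq> E \<and> is_cacti ends (Gs i)"
      using step[of i] Gs(1) assms(4,5) by (cases "i = 0") (simp_all add: attach_step_def)
  qed
  moreover note attach_step_conditions[OF E step refl]
  ultimately show ?thesis
    using Gs(1,2) by (intro disjI2 exI[of _ r] exI[of _ "\<lambda>i. Gs i - Gs (i - 1)"] exI[of _ Gs]) simp
qed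

end
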